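(* Fix $b\in\mathbb{N}$ and let $\Lambda:\mathbb{N}\times\mathbb{N}\to\mathbb{C}$ be a bounded function such that for each $k\in\mathbb{N}$ the limit \[ M_{b,k}(\Lambda)=\lim_{N\to\infty}\frac{\sum_{(r,s)\in T_{N,b,k}}\Lambda(r,s)}{|T_{N,b,k}|} \] exists, where $T_{N,b,k}=\{(r,s): 0<r,s\le N,\ \gcd_b(r,s)=k\}$. Let $\zeta_{\Lambda,b}(s)=\sum_{k=1}^\infty M_{b,k}(\Lambda)k^{-s}$. Then $\zeta_{\Lambda,b}(s)$ converges at $s=b+1$, the mean value $M(\Lambda)$ exists, and \[ M(\Lambda)=\frac{\zeta_{\Lambda,b}(b+1)}{\zeta(b+1)}, \] where $\zeta$ is the Riemann zeta function.
   Context: For $r,s\in\mathbb{N}$, $\gcd_b(r,s)=\max\{k\in\mathbb{N} : k\mid r \text{ and } k^b\mid s\}$. For $N\in\mathbb{N}$ let $T_N=\{(r,s): 0<r,s\le N\}$; the mean value of $\Lambda$ is $M(\Lambda)=\lim_{N\to\infty}\frac{1}{N^2}\sum_{(r,s)\in T_N}\Lambda(r,s)$. *)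

theory Defs
  imports "HOL-Analysis.Analysis"
begin

definition gcdb :: "nat \<Rightarrow> nat \<Rightarrow> nat \<Rightarrow> nat" where
  "gcdb b r s = Max {k. k dvd r \<and> k ^ b dvd s}"

definition TN :: "nat \<Rightarrow> (nat \<times> nat) set" where
  "TN N = {(r, s). 0 < r \<and> r \<le> N \<and> 0 < s \<and> s \<le> N}"

definition TNbk :: "nat \<Rightarrow> nat \<Rightarrow> nat \<Rightarrow> (nat \<times> nat) set" where
  "TNbk N b k = {(r, s). (r, s) \<in> TN N \<and> gcdb b r s = k}"

definition avg_bk :: "(nat \<Rightarrow> nat \<Rightarrow> complex) \<Rightarrow> nat \<Rightarrow> nat \<Rightarrow> nat \<Rightarrow> complex" where
  "avg_bk \<Lambda> b k N = (\<Sum>(r, s)\<in>TNbk N b k. \<Lambda> r s) / of_nat (card (TNbk N b k))"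

text \<open>M_{b,k}(Lambda), the limit of the averages (meaningful when it exists).\<close>
definition Mbk :: "(nat \<Rightarrow> nat \<Rightarrow> complex) \<Rightarrow> nat \<Rightarrow> nat \<Rightarrow> complex" where
  "Mbk \<Lambda> b k = lim (avg_bk \<Lambda> b k)"

text \<open>Riemann zeta at a positive integer s \<ge> 2: sum_{n \<ge> 1} n^{-s}.\<close>
definition zeta_nat :: "nat \<Rightarrow> complex" where
  "zeta_nat m = (\<Sum>n. 1 / of_nat (Suc n) ^ m)"

end

theory Submission
  imports Defs "HOL-Computational_Algebra.Squarefree"
begin

(* Moebius inversion over the multiples of k turns the condition gcd_b(r,s) = k into the conditions
   kd | r and (kd)^b | s, so the pairs of T_N with gcd_b(r,s) = k number
   sum_d mu(d) floor(N/kd) floor(N/(kd)^b); by dominated convergence they have density c/k^(b+1)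
   with c = sum_d mu(d)/d^(b+1).  Splitting T_N by the value of gcd_b, the mean of Lambda over T_N is
   the sum over k of these densities times the averages of Lambda over T_{N,b,k}.  The densities are
   bounded by 1/k^(b+1), so Tannery's theorem gives M(Lambda) = c zeta_{Lambda,b}(b+1); for Lambda = 1
   this reads 1 = c zeta(b+1). *)

section \<open>The Moebius function\<close>

definition moebius_mu :: "nat \<Rightarrow> real" where
  "moebius_mu n = (if squarefree n then (-1) ^ card (prime_factors n) else 0)"

lemma abs_moebius_mu_le_1: "\<bar>moebius_mu n\<bar> \<le> 1"
  by (simp add: moebius_mu_def)

lemma sum_Pow_neg_one_pow_card:
  assumes "finite A"
  shows "(\<Sum>X\<in>Pow A. (-1 :: 'a :: comm_ring_1) ^ card X) = (if A = {} then 1 else 0)"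
  using prod_diff_conv_sum[OF assms, of "\<lambda>_. 1 :: 'a" "\<lambda>_. 1"] assms
  by (cases "A = {}") (auto simp: power_0_left)

lemma prime_factors_Prod_primes:
  assumes "finite S" "\<forall>p\<in>S. prime (p :: nat)"
  shows "prime_factors (\<Prod>S) = S"
proof -
  have "prime_factors (prod id S) = \<Union>((prime_factors \<circ> id) ` S)"
    using assms by (intro prime_factors_prod) auto
  also have "\<dots> = S" using assms by (auto simp: prime_factorization_prime)
  finally show ?thesis by simp
qed

lemma Prod_dvd_of_subset_prime_factors:
  assumes "S \<subseteq> prime_factors (n :: nat)"
  shows "\<Prod>S dvd n"
proof -
  have "finite S" using assms finite_subset by blast
  then show ?thesis using assms
  proof (induction S rule: finite_induct)
    case (insert p S)
    have "coprime p (\<Prod>S)"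
      using insert by (intro prod_coprime_right) (auto intro!: primes_coprime)
    then show ?case using insert by (auto intro: divides_mult)
  qed simp
qed

lemma squarefree_divisors_eq_Prod_Pow:
  assumes "n > (0 :: nat)"
  shows "{d. d dvd n \<and> squarefree d} = Prod ` Pow (prime_factors n)"
proof (intro equalityI subsetI)
  fix d assume "d \<in> Prod ` Pow (prime_factors n)"
  then obtain S where S: "S \<subseteq> prime_factors n" and d: "d = \<Prod>S" by blast
  have "squarefree (prod id S)"
    using S by (intro squarefree_prod_coprime) (auto intro: primes_coprime squarefree_prime)
  then show "d \<in> {d. d dvd n \<and> squarefree d}"
    using Prod_dvd_of_subset_prime_factors[OF S] d by simp
next
  fix d assume "d \<in> {d. d dvd n \<and> squarefree d}"
  then have d: "d dvd n" "squarefree d" by auto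
  have d0: "d \<noteq> 0" using d assms by auto
  have "d = (\<Prod>p\<in>prime_factors d. p ^ multiplicity p d)"
    using prod_prime_factors[OF d0] by simp
  also have "\<dots> = \<Prod>(prime_factors d)"
    using d(2) squarefree_factorial_semiring'[OF d0] by simp
  finally show "d \<in> Prod ` Pow (prime_factors n)"
    using d d0 assms by (auto simp: prime_factors_dvd intro: dvd_trans)
qed

lemma sum_moebius_mu_divisors:
  assumes "n > 0"
  shows "(\<Sum>d | d dvd n. moebius_mu d) = (if n = 1 then 1 else 0)"
proof -
  have prime_factors_Prod: "prime_factors (\<Prod>S) = S" if "S \<in> Pow (prime_factors n)" for S
    using that by (intro prime_factors_Prod_primes) (auto intro: finite_subset)
  then have Prod_inj: "inj_on Prod (Pow (prime_factors n))"
    by (rule inj_on_inverseI)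
  have "(\<Sum>d | d dvd n. moebius_mu d) = (\<Sum>d | d dvd n \<and> squarefree d. moebius_mu d)"
    using assms by (intro sum.mono_neutral_cong_right) (auto simp: moebius_mu_def)
  also have "\<dots> = (\<Sum>S\<in>Pow (prime_factors n). (-1) ^ card (prime_factors (\<Prod>S)))"
    unfolding squarefree_divisors_eq_Prod_Pow[OF assms] sum.reindex[OF Prod_inj]
    using squarefree_divisors_eq_Prod_Pow[OF assms] by (intro sum.cong) (auto simp: moebius_mu_def)
  also have "\<dots> = (\<Sum>S\<in>Pow (prime_factors n). (-1) ^ card S)"
    by (simp add: prime_factors_Prod)
  also have "\<dots> = (if n = 1 then 1 else 0)"
    using assms by (simp add: sum_Pow_neg_one_pow_card prime_factorization_empty_iff)
  finally show ?thesis .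
qed

section \<open>The b-gcd\<close>

lemma lcm_power_nat: "lcm (a :: nat) c ^ n = lcm (a ^ n) (c ^ n)"
proof (cases "gcd a c = 0")
  case False
  have "lcm a c ^ n * gcd a c ^ n = (a * c) ^ n"
    by (metis prod_gcd_lcm_nat mult.commute power_mult_distrib)
  also have "\<dots> = lcm (a ^ n) (c ^ n) * gcd a c ^ n"
    by (metis prod_gcd_lcm_nat mult.commute power_mult_distrib gcd_exp)
  finally show ?thesis using False by auto
qed (cases n; simp)

lemma finite_gcdb_candidates: "r > 0 \<Longrightarrow> finite {k. k dvd r \<and> k ^ b dvd (s :: nat)}"
  by (rule finite_subset[of _ "{..r}"]) (auto dest: dvd_imp_le)

lemma gcdb_dvd:
  assumes "r > 0"
  shows "gcdb b r s dvd r" and "gcdb b r s ^ b dvd s"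
proof -
  have "gcdb b r s \<in> {k. k dvd r \<and> k ^ b dvd s}"
    unfolding gcdb_def using finite_gcdb_candidates[OF assms] by (intro Max_in) auto
  then show "gcdb b r s dvd r" and "gcdb b r s ^ b dvd s" by simp_all
qed

lemma gcdb_pos: "r > 0 \<Longrightarrow> gcdb b r s > 0"
  using gcdb_dvd(1)[of r b s] by (cases "gcdb b r s") auto

lemma gcdb_le: "r > 0 \<Longrightarrow> gcdb b r s \<le> r"
  using gcdb_dvd(1)[of r b s] by (simp add: dvd_imp_le)

lemma dvd_gcdb_iff:
  assumes "r > 0"
  shows "d dvd gcdb b r s \<longleftrightarrow> d dvd r \<and> d ^ b dvd s"
proof
  assume "d dvd gcdb b r s"
  then show "d dvd r \<and> d ^ b dvd s"
    using gcdb_dvd[OF assms] by (auto intro: dvd_trans dvd_power_same)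
next
  assume d: "d dvd r \<and> d ^ b dvd s"
  define M where "M = gcdb b r s"
  have "lcm d M dvd r \<and> lcm d M ^ b dvd s"
    using d gcdb_dvd[OF assms] by (simp add: M_def lcm_power_nat)
  then have "lcm d M \<le> M"
    unfolding M_def gcdb_def using finite_gcdb_candidates[OF assms] by (intro Max_ge) auto
  moreover have "M \<le> lcm d M"
  proof (rule dvd_imp_le)
    have "d > 0" using d assms by (auto intro!: Nat.gr0I)
    then show "lcm d M > 0" using gcdb_pos[OF assms] by (simp add: M_def lcm_pos_nat)
  qed simp
  ultimately have "lcm d M = M" by simp
  then show "d dvd gcdb b r s" by (metis M_def dvd_lcm1)
qed

section \<open>Counting lattice points\<close>

lemma TN_eq_product: "TN N = {1..N} \<times> {1..N}"
  by (auto simp: TN_def)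

lemma finite_TN: "finite (TN N)"
  by (simp add: TN_eq_product)

lemma card_multiples_atLeastAtMost:
  assumes "m > (0 :: nat)"
  shows "card {r \<in> {1..N}. m dvd r} = N div m"
proof -
  have "{r \<in> {1..N}. m dvd r} = (\<lambda>i. m * i) ` {1..N div m}"
  proof (intro equalityI subsetI)
    fix r assume r: "r \<in> {r \<in> {1..N}. m dvd r}"
    then obtain i where "r = m * i" by blast
    with r assms show "r \<in> (\<lambda>i. m * i) ` {1..N div m}"
      by (auto simp: less_eq_div_iff_mult_less_eq mult.commute intro!: Nat.gr0I)
  qed (use assms in \<open>auto simp: less_eq_div_iff_mult_less_eq mult.commute\<close>)
  moreover have "inj_on (\<lambda>i. m * i) {1..N div m}"
    using assms by (auto intro: inj_onI)
  ultimately show ?thesis by (simp add: card_image)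
qed

lemma card_TN_multiples:
  assumes "m > (0 :: nat)"
  shows "card {(r, s) \<in> TN N. m dvd r \<and> m ^ b dvd s} = (N div m) * (N div m ^ b)"
proof -
  have "{(r, s) \<in> TN N. m dvd r \<and> m ^ b dvd s}
      = {r \<in> {1..N}. m dvd r} \<times> {s \<in> {1..N}. m ^ b dvd s}"
    by (auto simp: TN_def)
  then show ?thesis
    using assms card_multiples_atLeastAtMost[of m N] card_multiples_atLeastAtMost[of "m ^ b" N]
    by (simp add: card_cartesian_product)
qed

lemma finite_TNbk: "finite (TNbk N b k)"
  by (rule finite_subset[OF _ finite_TN]) (auto simp: TNbk_def)

lemma gcdb_TN_bounds: "(r, s) \<in> TN N \<Longrightarrow> 0 < gcdb b r s \<and> gcdb b r s \<le> N"
  using gcdb_pos[of r b s] gcdb_le[of r b s] by (simp add: TN_def)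

lemma TNbk_eq_empty: "N < k \<Longrightarrow> TNbk N b k = {}"
  by (auto simp: TNbk_def dest!: gcdb_TN_bounds[where b = b])

lemma sum_TN_eq_sum_TNbk: "(\<Sum>x\<in>TN N. f x) = (\<Sum>k<N. \<Sum>x\<in>TNbk N b (Suc k). f x)"
proof -
  let ?g = "\<lambda>(r, s). gcdb b r s - 1"
  have "?g ` TN N \<subseteq> {..<N}"
    by (auto dest!: gcdb_TN_bounds[where b = b])
  then have "(\<Sum>x\<in>TN N. f x) = (\<Sum>k<N. \<Sum>x\<in>{x \<in> TN N. ?g x = k}. f x)"
    by (simp add: sum.group[OF finite_TN finite_lessThan])
  moreover have "{x \<in> TN N. ?g x = k} = TNbk N b (Suc k)" for k
  proof -
    have "?g (r, s) = k \<longleftrightarrow> gcdb b r s = Suc k" if "(r, s) \<in> TN N" for r s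
      using gcdb_TN_bounds[OF that, of b] by auto
    then show ?thesis by (auto simp: TNbk_def)
  qed
  ultimately show ?thesis by simp
qed

lemma card_TNbk_le:
  assumes "k > 0"
  shows "card (TNbk N b k) \<le> (N div k) * (N div k ^ b)"
proof -
  have "TNbk N b k \<subseteq> {(r, s) \<in> TN N. k dvd r \<and> k ^ b dvd s}"
    using gcdb_dvd by (fastforce simp: TNbk_def TN_def)
  then have "card (TNbk N b k) \<le> card {(r, s) \<in> TN N. k dvd r \<and> k ^ b dvd s}"
    by (intro card_mono) (auto intro: finite_subset[OF _ finite_TN])
  then show ?thesis using card_TN_multiples[OF assms] by simp
qed

lemma moebius_mu_inversion_indicator:
  assumes "k > 0" "G > 0" "G \<le> N"
  shows "(if G = k then 1 else 0) = (\<Sum>d = 1..N. if k * d dvd G then moebius_mu d else 0)"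
proof (cases "k dvd G")
  case True
  then obtain m where m: "G = k * m" by blast
  have "m > 0" "m \<le> N"
    using m assms by (auto intro!: Nat.gr0I order.trans[OF _ \<open>G \<le> N\<close>])
  then have "{d \<in> {1..N}. d dvd m} = {d. d dvd m}"
    by (auto dest: dvd_imp_le intro: Nat.gr0I)
  then have "(\<Sum>d = 1..N. if k * d dvd G then moebius_mu d else 0) = (\<Sum>d | d dvd m. moebius_mu d)"
    using assms by (simp add: m sum.inter_filter[symmetric])
  also have "\<dots> = (if m = 1 then 1 else 0)"
    by (rule sum_moebius_mu_divisors[OF \<open>m > 0\<close>])
  finally show ?thesis using m assms by auto
next
  case False
  then show ?thesis by (auto intro!: sum.neutral dest: dvd_mult_left)
qed

lemma card_TNbk_moebius_mu:
  assumes "k > 0"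
  shows "real (card (TNbk N b k))
       = (\<Sum>d = 1..N. moebius_mu d * real ((N div (k * d)) * (N div (k * d) ^ b)))"
proof -
  define g where "g x = gcdb b (fst x) (snd x)" for x
  have g: "0 < g x \<and> g x \<le> N" if "x \<in> TN N" for x
    using that gcdb_TN_bounds[of "fst x" "snd x" N b] by (simp add: g_def)
  have "real (card (TNbk N b k)) = (\<Sum>x\<in>TN N. if g x = k then 1 else 0)"
    using finite_TN by (simp add: TNbk_def g_def sum.If_cases Int_def case_prod_unfold)
  also have "\<dots> = (\<Sum>x\<in>TN N. \<Sum>d = 1..N. if k * d dvd g x then moebius_mu d else 0)"
    using assms g by (intro sum.cong refl moebius_mu_inversion_indicator) auto
  also have "\<dots> = (\<Sum>d = 1..N. \<Sum>x\<in>TN N. if k * d dvd g x then moebius_mu d else 0)"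
    by (rule sum.swap)
  also have "\<dots> = (\<Sum>d = 1..N. moebius_mu d * real (card {x \<in> TN N. k * d dvd g x}))"
    using finite_TN by (simp add: sum.If_cases Int_def mult.commute)
  also have "\<dots> = (\<Sum>d = 1..N. moebius_mu d * real ((N div (k * d)) * (N div (k * d) ^ b)))"
  proof (intro sum.cong refl)
    fix d assume "d \<in> {1..N}"
    then have "{x \<in> TN N. k * d dvd g x} = {(r, s) \<in> TN N. k * d dvd r \<and> (k * d) ^ b dvd s}"
      using dvd_gcdb_iff by (fastforce simp: g_def TN_def)
    then show "moebius_mu d * real (card {x \<in> TN N. k * d dvd g x})
             = moebius_mu d * real ((N div (k * d)) * (N div (k * d) ^ b))"
      using assms \<open>d \<in> {1..N}\<close> by (simp add: card_TN_multiples)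
  qed
  finally show ?thesis .
qed

section \<open>Densities\<close>

lemma multiples_density_le: "real (N div m) / real N \<le> 1 / real m"
proof (cases "N = 0 \<or> m = 0")
  case False
  have "real (N div m) * real m \<le> real N"
    by (metis of_nat_le_iff of_nat_mult div_times_less_eq_dividend)
  then show ?thesis using False by (simp add: field_simps)
qed auto

lemma multiples_density_tendsto:
  assumes "m > 0"
  shows "(\<lambda>N. real (N div m) / real N) \<longlonglongrightarrow> 1 / real m"
proof (rule tendsto_sandwich[of "\<lambda>N. 1 / real m - 1 / real N" _ _ "\<lambda>_. 1 / real m"])
  show "\<forall>\<^sub>F N in sequentially. 1 / real m - 1 / real N \<le> real (N div m) / real N"
    using eventually_gt_at_top[of 0]
  proof eventually_elim
    case (elim N)
    have "real N < real ((N div m + 1) * m)"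
      using assms by (simp only: of_nat_less_iff) (simp add: dividend_less_div_times)
    then have "real N / real m < real (N div m) + 1"
      using assms by (subst pos_divide_less_eq) (auto simp: distrib_right)
    then have "(real N / real m - 1) / real N \<le> real (N div m) / real N"
      by (intro divide_right_mono) auto
    then show ?case using elim assms by (simp add: diff_divide_distrib)
  qed
  show "(\<lambda>N. 1 / real m - 1 / real N) \<longlonglongrightarrow> 1 / real m"
    using tendsto_diff[OF tendsto_const lim_1_over_n] by simp
qed (auto simp: multiples_density_le)

lemma multiple_pairs_density_le:
  "real ((N div m) * (N div m ^ b)) / real (N ^ 2) \<le> 1 / real m ^ (b + 1)"
proof -
  have "real ((N div m) * (N div m ^ b)) / real (N ^ 2)
      = real (N div m) / real N * (real (N div m ^ b) / real N)"
    by (simp add: power2_eq_square)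
  also have "\<dots> \<le> 1 / real m * (1 / real (m ^ b))"
    by (intro mult_mono multiples_density_le) auto
  finally show ?thesis by simp
qed

lemma multiple_pairs_density_tendsto:
  assumes "m > 0"
  shows "(\<lambda>N. real ((N div m) * (N div m ^ b)) / real (N ^ 2)) \<longlonglongrightarrow> 1 / real m ^ (b + 1)"
proof -
  have "(\<lambda>N. real (N div m) / real N * (real (N div m ^ b) / real N))
          \<longlonglongrightarrow> 1 / real m * (1 / real (m ^ b))"
    using assms by (intro tendsto_mult multiples_density_tendsto) auto
  then show ?thesis by (simp add: power2_eq_square)
qed

lemma summable_inverse_power_Suc:
  assumes "s \<ge> 2"
  shows "summable (\<lambda>n. 1 / real (Suc n) ^ s)"
proof -
  have "summable (\<lambda>n. inverse (real n ^ s))"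
    using assms by (intro inverse_power_summable) auto
  then show ?thesis
    by (subst (asm) summable_Suc_iff[symmetric]) (simp add: inverse_eq_divide)
qed

definition moebius_mu_dirichlet :: "nat \<Rightarrow> real" where
  "moebius_mu_dirichlet s = (\<Sum>n. moebius_mu (Suc n) / real (Suc n) ^ s)"

lemma summable_moebius_mu_dirichlet:
  assumes "s \<ge> 2"
  shows "summable (\<lambda>n. moebius_mu (Suc n) / real (Suc n) ^ s)"
proof (rule summable_comparison_test[OF _ summable_inverse_power_Suc[OF assms]])
  show "\<exists>N. \<forall>n\<ge>N. norm (moebius_mu (Suc n) / real (Suc n) ^ s) \<le> 1 / real (Suc n) ^ s"
    using abs_moebius_mu_le_1 by (auto simp: abs_divide intro!: divide_right_mono)
qed

lemma tendsto_suminf_dominated: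
  fixes a :: "nat \<Rightarrow> nat \<Rightarrow> 'a :: {real_normed_algebra, banach}"
  assumes "\<And>k. a k \<longlonglongrightarrow> L k" and "\<And>k n. norm (a k n) \<le> M k" and "summable M"
  shows "(\<lambda>n. \<Sum>k. a k n) \<longlonglongrightarrow> (\<Sum>k. L k)"
  using tannerys_theorem[of a L sequentially M] assms by (simp add: always_eventually)

lemma density_TNbk_le:
  assumes "k > 0"
  shows "real (card (TNbk N b k)) / real (N ^ 2) \<le> 1 / real k ^ (b + 1)"
proof -
  have "real (card (TNbk N b k)) / real (N ^ 2) \<le> real ((N div k) * (N div k ^ b)) / real (N ^ 2)"
    using card_TNbk_le[OF assms, of N b] by (intro divide_right_mono) (simp_all only: of_nat_le_iff)
  also have "\<dots> \<le> 1 / real k ^ (b + 1)"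
    by (rule multiple_pairs_density_le)
  finally show ?thesis .
qed

lemma density_TNbk_eq_suminf:
  assumes "k > 0"
  shows "real (card (TNbk N b k)) / real (N ^ 2)
       = (\<Sum>d. moebius_mu (Suc d) * (real ((N div (k * Suc d)) * (N div (k * Suc d) ^ b)) / real (N ^ 2)))"
    (is "_ = (\<Sum>d. ?a d)")
proof -
  have "real (card (TNbk N b k)) / real (N ^ 2) = (\<Sum>d<N. ?a d)"
    unfolding card_TNbk_moebius_mu[OF assms] by (simp add: sum_divide_distrib sum.atLeast1_atMost_eq)
  also have "\<dots> = (\<Sum>d. ?a d)"
  proof (rule suminf_finite[symmetric])
    fix d assume "d \<notin> {..<N}"
    moreover have "Suc d \<le> k * Suc d" using assms by (cases k) auto
    ultimately show "?a d = 0" by simp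
  qed simp
  finally show ?thesis .
qed

lemma density_TNbk_tendsto:
  assumes "k > 0" "b \<ge> 1"
  shows "(\<lambda>N. real (card (TNbk N b k)) / real (N ^ 2))
           \<longlonglongrightarrow> moebius_mu_dirichlet (b + 1) / real k ^ (b + 1)"
proof -
  have "(\<lambda>N. \<Sum>d. moebius_mu (Suc d) * (real ((N div (k * Suc d)) * (N div (k * Suc d) ^ b)) / real (N ^ 2)))
          \<longlonglongrightarrow> (\<Sum>d. moebius_mu (Suc d) * (1 / real (k * Suc d) ^ (b + 1)))"
  proof (rule tendsto_suminf_dominated)
    show "(\<lambda>N. moebius_mu (Suc d) * (real ((N div (k * Suc d)) * (N div (k * Suc d) ^ b)) / real (N ^ 2)))
            \<longlonglongrightarrow> moebius_mu (Suc d) * (1 / real (k * Suc d) ^ (b + 1))" for d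
      using assms by (intro tendsto_mult tendsto_const multiple_pairs_density_tendsto) simp
    show "norm (moebius_mu (Suc d) * (real ((N div (k * Suc d)) * (N div (k * Suc d) ^ b)) / real (N ^ 2)))
            \<le> 1 / real (Suc d) ^ (b + 1)" for d N
    proof -
      have "norm (moebius_mu (Suc d) * (real ((N div (k * Suc d)) * (N div (k * Suc d) ^ b)) / real (N ^ 2)))
          \<le> 1 * (1 / real (k * Suc d) ^ (b + 1))"
        unfolding real_norm_def abs_mult abs_of_nonneg[OF divide_nonneg_nonneg[OF of_nat_0_le_iff of_nat_0_le_iff]]
        by (rule mult_mono[OF abs_moebius_mu_le_1 multiple_pairs_density_le]) simp_all
      also have "\<dots> \<le> 1 / real (Suc d) ^ (b + 1)"
      proof -
        have "Suc d \<le> k * Suc d" using assms(1) by (cases k) auto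
        then show ?thesis unfolding mult_1_left
          by (intro frac_le power_mono zero_less_power) (auto simp del: of_nat_Suc of_nat_mult)
      qed
      finally show ?thesis .
    qed
    show "summable (\<lambda>d. 1 / real (Suc d) ^ (b + 1))"
      using assms(2) by (intro summable_inverse_power_Suc) simp
  qed
  also have "(\<Sum>d. moebius_mu (Suc d) * (1 / real (k * Suc d) ^ (b + 1)))
           = (\<Sum>d. moebius_mu (Suc d) / real (Suc d) ^ (b + 1) / real k ^ (b + 1))"
    by (simp add: power_mult_distrib mult_ac del: of_nat_Suc mult_Suc_right)
  also have "\<dots> = moebius_mu_dirichlet (b + 1) / real k ^ (b + 1)"
    unfolding moebius_mu_dirichlet_def using assms(2)
    by (intro suminf_divide summable_moebius_mu_dirichlet) simp
  finally show ?thesis unfolding density_TNbk_eq_suminf[OF assms(1)] .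
qed

lemma tendsto_suminf_density_TNbk_weighted:
  fixes x :: "nat \<Rightarrow> nat \<Rightarrow> 'a :: {real_normed_algebra_1, banach}"
  assumes "b \<ge> 1" and "\<And>k. x k \<longlonglongrightarrow> L k" and "\<And>k N. norm (x k N) \<le> B"
  shows "(\<lambda>N. \<Sum>k. of_real (real (card (TNbk N b (Suc k))) / real (N ^ 2)) * x k N)
           \<longlonglongrightarrow> (\<Sum>k. of_real (moebius_mu_dirichlet (b + 1) / real (Suc k) ^ (b + 1)) * L k)"
proof (rule tendsto_suminf_dominated)
  show "(\<lambda>N. of_real (real (card (TNbk N b (Suc k))) / real (N ^ 2)) * x k N)
          \<longlonglongrightarrow> of_real (moebius_mu_dirichlet (b + 1) / real (Suc k) ^ (b + 1)) * L k" for k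
    using assms by (intro tendsto_mult tendsto_of_real density_TNbk_tendsto) auto
  show "norm (of_real (real (card (TNbk N b (Suc k))) / real (N ^ 2)) * x k N)
          \<le> 1 / real (Suc k) ^ (b + 1) * B" for k N
  proof -
    have "norm (of_real (real (card (TNbk N b (Suc k))) / real (N ^ 2)) * x k N)
        \<le> real (card (TNbk N b (Suc k))) / real (N ^ 2) * norm (x k N)"
      using norm_mult_ineq by (metis abs_of_nonneg norm_of_real of_nat_0_le_iff divide_nonneg_nonneg)
    also have "\<dots> \<le> 1 / real (Suc k) ^ (b + 1) * B"
      by (rule mult_mono[OF density_TNbk_le assms(3)]) auto
    finally show ?thesis .
  qed
  show "summable (\<lambda>k. 1 / real (Suc k) ^ (b + 1) * B)"
    using assms(1) by (intro summable_mult2 summable_inverse_power_Suc) simp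
qed

lemma sum_card_TNbk: "(\<Sum>k<N. card (TNbk N b (Suc k))) = N ^ 2"
  using sum_TN_eq_sum_TNbk[of "\<lambda>_. 1 :: nat" N b] by (simp add: TN_eq_product power2_eq_square)

(* Proved by counting: the densities of the sets TNbk N b k, which partition TN N, add up to 1. *)
lemma moebius_mu_dirichlet_mult_zeta:
  assumes "s \<ge> 2"
  shows "moebius_mu_dirichlet s * (\<Sum>n. 1 / real (Suc n) ^ s) = 1"
proof -
  define b where "b = s - 1"
  have b: "b \<ge> 1" "s = b + 1" using assms by (simp_all add: b_def)
  have "(\<lambda>N. \<Sum>k. real (card (TNbk N b (Suc k))) / real (N ^ 2))
          \<longlonglongrightarrow> (\<Sum>k. moebius_mu_dirichlet (b + 1) / real (Suc k) ^ (b + 1))"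
    using tendsto_suminf_density_TNbk_weighted[of b "\<lambda>_ _. 1 :: real" "\<lambda>_. 1" 1] b by simp
  moreover have "(\<Sum>k. real (card (TNbk N b (Suc k))) / real (N ^ 2)) = 1" if "N > 0" for N
  proof -
    have "(\<Sum>k. real (card (TNbk N b (Suc k))) / real (N ^ 2))
        = (\<Sum>k<N. real (card (TNbk N b (Suc k))) / real (N ^ 2))"
      by (rule suminf_finite) (auto simp: TNbk_eq_empty)
    also have "\<dots> = 1"
      using that by (simp flip: sum_divide_distrib of_nat_sum add: sum_card_TNbk)
    finally show ?thesis .
  qed
  then have "(\<lambda>N. \<Sum>k. real (card (TNbk N b (Suc k))) / real (N ^ 2)) \<longlonglongrightarrow> 1"
    by (intro tendsto_eventually eventually_mono[OF eventually_gt_at_top[of 0]])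
  ultimately have "(\<Sum>k. moebius_mu_dirichlet (b + 1) / real (Suc k) ^ (b + 1)) = 1"
    by (rule LIMSEQ_unique)
  then show ?thesis
    using suminf_mult[OF summable_inverse_power_Suc[OF assms], of "moebius_mu_dirichlet s"] b
    by simp
qed

section \<open>Mean values\<close>

lemma norm_avg_bk_le:
  assumes "\<forall>r s. norm (\<Lambda> r s) \<le> B"
  shows "norm (avg_bk \<Lambda> b k N) \<le> B"
proof (cases "TNbk N b k = {}")
  case False
  then have card_pos: "card (TNbk N b k) > 0"
    using finite_TNbk by (simp add: card_gt_0_iff)
  have "norm (\<Sum>(r, s)\<in>TNbk N b k. \<Lambda> r s) \<le> (\<Sum>_\<in>TNbk N b k. B)"
    by (rule sum_norm_le) (use assms in auto)
  then show ?thesis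
    using card_pos by (simp add: avg_bk_def norm_divide pos_divide_le_eq mult.commute)
qed (simp add: avg_bk_def order_trans[OF norm_ge_zero spec[OF spec[OF assms]]])

lemma density_times_avg_bk:
  "of_real (real (card (TNbk N b k)) / real M) * avg_bk \<Lambda> b k N
     = (\<Sum>(r, s)\<in>TNbk N b k. \<Lambda> r s) / of_nat M"
proof (cases "TNbk N b k = {}")
  case False
  then have "card (TNbk N b k) \<noteq> 0"
    using finite_TNbk by simp
  then show ?thesis
    by (simp add: avg_bk_def of_real_divide divide_simps)
qed (simp add: avg_bk_def)

lemma mean_eq_suminf_weighted_avg_bk:
  "(\<Sum>(r, s)\<in>TN N. \<Lambda> r s) / of_nat (N ^ 2)
     = (\<Sum>k. of_real (real (card (TNbk N b (Suc k))) / real (N ^ 2)) * avg_bk \<Lambda> b (Suc k) N)"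
proof -
  have "(\<Sum>k. of_real (real (card (TNbk N b (Suc k))) / real (N ^ 2)) * avg_bk \<Lambda> b (Suc k) N)
      = (\<Sum>k<N. (\<Sum>(r, s)\<in>TNbk N b (Suc k). \<Lambda> r s) / of_nat (N ^ 2))"
    unfolding density_times_avg_bk by (rule suminf_finite) (auto simp: TNbk_eq_empty)
  also have "\<dots> = (\<Sum>k<N. \<Sum>(r, s)\<in>TNbk N b (Suc k). \<Lambda> r s) / of_nat (N ^ 2)"
    by (rule sum_divide_distrib[symmetric])
  also have "\<dots> = (\<Sum>(r, s)\<in>TN N. \<Lambda> r s) / of_nat (N ^ 2)"
    by (simp only: sum_TN_eq_sum_TNbk[symmetric])
  finally show ?thesis ..
qed

lemma zeta_nat_eq_of_real:
  assumes "s \<ge> 2"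
  shows "zeta_nat s = of_real (\<Sum>n. 1 / real (Suc n) ^ s)"
proof -
  have "of_real (\<Sum>n. 1 / real (Suc n) ^ s) = (\<Sum>n. of_real (1 / real (Suc n) ^ s) :: complex)"
    by (rule suminf_of_real[OF summable_inverse_power_Suc[OF assms]])
  then show ?thesis by (simp add: zeta_nat_def)
qed

lemma norm_Mbk_le:
  assumes "\<forall>r s. norm (\<Lambda> r s) \<le> B" and "convergent (avg_bk \<Lambda> b k)"
  shows "norm (Mbk \<Lambda> b k) \<le> B"
proof -
  have "avg_bk \<Lambda> b k \<longlonglongrightarrow> Mbk \<Lambda> b k"
    using assms(2) by (simp add: Mbk_def convergent_LIMSEQ_iff)
  then show ?thesis
    by (rule LIMSEQ_le_const2[OF tendsto_norm]) (use norm_avg_bk_le[OF assms(1)] in blast)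
qed

lemma summable_Mbk_dirichlet:
  assumes "b \<ge> 1" and "\<forall>r s. norm (\<Lambda> r s) \<le> B" and "\<forall>k\<ge>1. convergent (avg_bk \<Lambda> b k)"
  shows "summable (\<lambda>n. Mbk \<Lambda> b (Suc n) / of_nat (Suc n) ^ (b + 1))"
proof (rule summable_comparison_test')
  show "summable (\<lambda>n. B * (1 / real (Suc n) ^ (b + 1)))"
    using assms(1) by (intro summable_mult summable_inverse_power_Suc) simp
  show "norm (Mbk \<Lambda> b (Suc n) / of_nat (Suc n) ^ (b + 1)) \<le> B * (1 / real (Suc n) ^ (b + 1))" for n
  proof -
    have "norm (Mbk \<Lambda> b (Suc n) / of_nat (Suc n) ^ (b + 1))
        = norm (Mbk \<Lambda> b (Suc n)) / real (Suc n) ^ (b + 1)"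
      by (simp only: norm_divide norm_power norm_of_nat)
    also have "\<dots> \<le> B / real (Suc n) ^ (b + 1)"
      using assms(2,3) by (intro divide_right_mono norm_Mbk_le) auto
    finally show ?thesis by simp
  qed
qed

lemma of_real_moebius_mu_dirichlet:
  assumes "s \<ge> 2"
  shows "of_real (moebius_mu_dirichlet s) = 1 / zeta_nat s"
proof -
  have "of_real (moebius_mu_dirichlet s) * zeta_nat s = 1"
    using moebius_mu_dirichlet_mult_zeta[OF assms]
    by (simp add: zeta_nat_eq_of_real[OF assms] flip: of_real_mult)
  then show ?thesis
    by (simp add: eq_divide_eq) (metis mult_zero_right zero_neq_one)
qed

theorem mainTheorem6:
  fixes \<Lambda> :: "nat \<Rightarrow> nat \<Rightarrow> complex" and b :: nat
  assumes b_pos: "b \<ge> 1"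
    and bounded: "\<exists>B. \<forall>r s. norm (\<Lambda> r s) \<le> B"
    and lim_exists: "\<forall>k\<ge>1. convergent (avg_bk \<Lambda> b k)"
  shows "summable (\<lambda>n. Mbk \<Lambda> b (Suc n) / of_nat (Suc n) ^ (b + 1)) \<and>
         (\<lambda>N. (\<Sum>(r, s)\<in>TN N. \<Lambda> r s) / of_nat (N ^ 2))
           \<longlonglongrightarrow> (\<Sum>n. Mbk \<Lambda> b (Suc n) / of_nat (Suc n) ^ (b + 1)) / zeta_nat (b + 1)"
proof -
  obtain B where B: "\<forall>r s. norm (\<Lambda> r s) \<le> B" using bounded by blast
  have summable: "summable (\<lambda>n. Mbk \<Lambda> b (Suc n) / of_nat (Suc n) ^ (b + 1))"
    using b_pos B lim_exists by (rule summable_Mbk_dirichlet)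
  have avg_lim: "avg_bk \<Lambda> b (Suc k) \<longlonglongrightarrow> Mbk \<Lambda> b (Suc k)" for k
    using lim_exists by (simp add: Mbk_def convergent_LIMSEQ_iff)
  define \<mu> where "\<mu> = moebius_mu_dirichlet (b + 1)"
  have "(\<lambda>N. (\<Sum>(r, s)\<in>TN N. \<Lambda> r s) / of_nat (N ^ 2))
          \<longlonglongrightarrow> (\<Sum>k. of_real (\<mu> / real (Suc k) ^ (b + 1)) * Mbk \<Lambda> b (Suc k))"
    unfolding mean_eq_suminf_weighted_avg_bk[where b = b] \<mu>_def
    using b_pos avg_lim norm_avg_bk_le[OF B] by (rule tendsto_suminf_density_TNbk_weighted)
  also have "(\<Sum>k. of_real (\<mu> / real (Suc k) ^ (b + 1)) * Mbk \<Lambda> b (Suc k))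
           = of_real \<mu> * (\<Sum>k. Mbk \<Lambda> b (Suc k) / of_nat (Suc k) ^ (b + 1))"
    by (subst suminf_mult[OF summable, symmetric]) (simp add: of_real_divide)
  also have "of_real \<mu> = 1 / zeta_nat (b + 1)"
    unfolding \<mu>_def using b_pos by (intro of_real_moebius_mu_dirichlet) simp
  finally show ?thesis using summable by simp
qed

end
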